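(* Under the setting described in the context, the sequence $\{u_n\}_{n\in\mathbb{N}}$ is bounded in $L^\infty(0,T;L^2(0,L))$ for every $T>0$.
   Context: $L>0$. $\Phi\in C(\mathbb{R})\cap C^1(\mathbb{R}\setminus\{\pm1\})$ is constant on $(-\infty,-1]$ and on $[1,\infty)$, convex on $[-1,1]$, decreasing on $[-1,0]$, increasing on $[0,1]$; $u_0\in H^1(0,L)$, $u_1\in L^2(0,L)$. Sequences $\{u_{0,n}\},\{u_{1,n}\}\subset C^\infty([0,L])$, $\{\Phi_n\}\subset C^\infty(\mathbb{R})$ satisfy: $u_{0,n}\to u_0$ in $H^1(0,L)$, $u_{1,n}\to u_1$ in $L^2(0,L)$, $\Phi_n\to\Phi$ uniformly on $\mathbb{R}$; $\Phi_n'\to\Phi'$ pointwise on $\mathbb{R}$ and uniformly on $\mathbb{R}\setminus((-1-\varepsilon,-1+\varepsilon)\cup(1-\varepsilon,1+\varepsilon))$ for every $\varepsilon>0$; $\Phi_n'(u)=0$ whenever $|u|\ge1+\varepsilon$ (any $\varepsilon>0$, all $n$); there is $C>0$ independent of $n$ with $\|u_{0,n}\|_{H^1}\le C$, $\|u_{1,n}\|_{L^2}\le C$, $0\le\Phi_n,\Phi_n'\le C$; and $u_{0,n}'(0)=u_{0,n}'(L)=u_{1,n}(0)=u_{1,n}(L)=0$. For each $n$, $u_n$ is the (global) classical solution of $\partial_{tt}^2 u_n=\partial_{xx}^2 u_n-\Phi_n'(u_n)$ for $t>0$, $0<x<L$, with $\partial_x u_n(t,0)=\partial_x u_n(t,L)=0$,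 $u_n(0,\cdot)=u_{0,n}$, $\partial_t u_n(0,\cdot)=u_{1,n}$. *)

theory Defs
  imports "HOL-Analysis.Analysis"
begin

definition smooth_fun :: "(real \<Rightarrow> real) \<Rightarrow> bool" where
  "smooth_fun f \<longleftrightarrow> (\<forall>k x. ((deriv ^^ k) f) differentiable (at x))"

definition smooth_on_interval :: "real \<Rightarrow> real \<Rightarrow> (real \<Rightarrow> real) \<Rightarrow> bool" where
  "smooth_on_interval a b f \<longleftrightarrow>
     (\<exists>D :: nat \<Rightarrow> real \<Rightarrow> real. (\<forall>x\<in>{a..b}. D 0 x = f x) \<and>
        (\<forall>k. \<forall>x\<in>{a..b}. (D k has_real_derivative D (Suc k) x) (at x within {a..b})))"

definition L2 :: "real \<Rightarrow> (real \<Rightarrow> real) \<Rightarrow> bool" where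
  "L2 L f \<longleftrightarrow> f measurable_on {0..L} \<and> (\<lambda>x. (f x)\<^sup>2) integrable_on {0..L}"

definition L2norm :: "real \<Rightarrow> (real \<Rightarrow> real) \<Rightarrow> real" where
  "L2norm L f = sqrt (integral {0..L} (\<lambda>x. (f x)\<^sup>2))"

definition test_fun :: "real \<Rightarrow> (real \<Rightarrow> real) \<Rightarrow> bool" where
  "test_fun L \<phi> \<longleftrightarrow> smooth_fun \<phi> \<and> closure {x. \<phi> x \<noteq> 0} \<subseteq> {0<..<L}"

definition weak_deriv :: "real \<Rightarrow> (real \<Rightarrow> real) \<Rightarrow> (real \<Rightarrow> real) \<Rightarrow> bool" where
  "weak_deriv L f g \<longleftrightarrow> L2 L f \<and> L2 L g \<and>
     (\<forall>\<phi>. test_fun L \<phi> \<longrightarrow>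
        integral {0..L} (\<lambda>x. f x * deriv \<phi> x) = - integral {0..L} (\<lambda>x. g x * \<phi> x))"

definition H1 :: "real \<Rightarrow> (real \<Rightarrow> real) \<Rightarrow> bool" where
  "H1 L f \<longleftrightarrow> (\<exists>g. weak_deriv L f g)"

definition H1norm :: "real \<Rightarrow> (real \<Rightarrow> real) \<Rightarrow> real" where
  "H1norm L f = sqrt ((L2norm L f)\<^sup>2 + (L2norm L (SOME g. weak_deriv L f g))\<^sup>2)"

text \<open>Global classical solution of  u_tt = u_xx - F'(u)  on (0,\<infinity>)\<times>(0,L) with homogeneous
  Neumann boundary conditions and initial data v0, v1:
  u is C^1 on [0,\<infinity>)\<times>[0,L] and C^2 on (0,\<infinity>)\<times>(0,L).  u t x = u(t,x).\<close>
definition classical_solution ::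
  "real \<Rightarrow> (real \<Rightarrow> real) \<Rightarrow> (real \<Rightarrow> real) \<Rightarrow> (real \<Rightarrow> real) \<Rightarrow> (real \<Rightarrow> real \<Rightarrow> real) \<Rightarrow> bool" where
  "classical_solution L F v0 v1 u \<longleftrightarrow>
    (\<exists>ut ux utt uxx utx uxt :: real \<Rightarrow> real \<Rightarrow> real.
      continuous_on ({0..} \<times> {0..L}) (\<lambda>(t,x). u t x) \<and>
      continuous_on ({0..} \<times> {0..L}) (\<lambda>(t,x). ut t x) \<and>
      continuous_on ({0..} \<times> {0..L}) (\<lambda>(t,x). ux t x) \<and>
      (\<forall>t\<ge>0. \<forall>x\<in>{0..L}.
         ((\<lambda>s. u s x) has_real_derivative ut t x) (at t within {0..}) \<and>
         ((\<lambda>y. u t y) has_real_derivative ux t x) (at x within {0..L})) \<and>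
      (\<forall>t>0. \<forall>x\<in>{0<..<L}.
         ((\<lambda>s. ut s x) has_real_derivative utt t x) (at t) \<and>
         ((\<lambda>y. ux t y) has_real_derivative uxx t x) (at x) \<and>
         ((\<lambda>s. ux s x) has_real_derivative utx t x) (at t) \<and>
         ((\<lambda>y. ut t y) has_real_derivative uxt t x) (at x)) \<and>
      continuous_on ({0<..} \<times> {0<..<L}) (\<lambda>(t,x). utt t x) \<and>
      continuous_on ({0<..} \<times> {0<..<L}) (\<lambda>(t,x). uxx t x) \<and>
      continuous_on ({0<..} \<times> {0<..<L}) (\<lambda>(t,x). utx t x) \<and>
      continuous_on ({0<..} \<times> {0<..<L}) (\<lambda>(t,x). uxt t x) \<and>
      (\<forall>t>0. \<forall>x\<in>{0<..<L}. utt t x = uxx t x - deriv F (u t x)) \<and>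
      (\<forall>t>0. ux t 0 = 0 \<and> ux t L = 0) \<and>
      (\<forall>x\<in>{0..L}. u 0 x = v0 x \<and> ut 0 x = v1 x))"

end

theory Submission
  imports Defs
begin

text \<open>The bound comes from an auxiliary energy instead of the usual one, so that only
  \<open>\<bar>\<Phi>n'\<bar> \<le> C\<close> and the bounds on the data are needed.  Put \<open>h(t,x) = \<integral>\<^sub>0\<^sup>t u\<^sub>x ds\<close>.
  Integrating \<open>u\<^sub>t\<^sub>t + \<Phi>'(u) = u\<^sub>x\<^sub>x\<close> in time gives
  \<open>h\<^sub>x = u\<^sub>t(t) - u\<^sub>t(0) + \<integral>\<^sub>0\<^sup>t \<Phi>'(u) ds\<close>, and \<open>h\<close> inherits the Neumann condition, so
  integration by parts gives \<open>\<integral> h\<^sub>x u + h u\<^sub>x = 0\<close>.  Hence \<open>Q(t) = \<integral> u\<^sup>2 + h\<^sup>2\<close> satisfies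
  \<open>Q' = 2 \<integral> u (u\<^sub>t(0) - \<integral>\<^sub>0\<^sup>t \<Phi>'(u) ds) \<le> Q + 2 \<parallel>u\<^sub>1\<parallel>\<^sup>2 + 2 C\<^sup>2 T\<^sup>2 L\<close>, and Gronwall's
  inequality bounds \<open>\<parallel>u(t)\<parallel>\<^sup>2 \<le> Q(t)\<close> uniformly in \<open>n\<close>.\<close>

lemma continuous_on_curry_fst:
  fixes f :: "real \<Rightarrow> real \<Rightarrow> real"
  assumes "continuous_on (A \<times> B) (\<lambda>(t,x). f t x)" "t \<in> A"
  shows "continuous_on B (f t)"
proof -
  have "continuous_on B (\<lambda>x. (\<lambda>(t,x). f t x) (t, x))"
    by (rule continuous_on_compose2[OF assms(1)]) (use assms(2) in \<open>auto intro!: continuous_intros\<close>)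
  then show ?thesis by simp
qed

lemma continuous_on_curry_snd:
  fixes f :: "real \<Rightarrow> real \<Rightarrow> real"
  assumes "continuous_on (A \<times> B) (\<lambda>(t,x). f t x)" "x \<in> B"
  shows "continuous_on A (\<lambda>t. f t x)"
proof -
  have "continuous_on A (\<lambda>t. (\<lambda>(t,x). f t x) (t, x))"
    by (rule continuous_on_compose2[OF assms(1)]) (use assms(2) in \<open>auto intro!: continuous_intros\<close>)
  then show ?thesis by simp
qed

lemma integral_upto_eq_integral_min:
  fixes f :: "real \<Rightarrow> real"
  assumes "continuous_on {a..b} f" "t \<in> {a..b}"
  shows "integral {a..t} f = integral {a..b} (\<lambda>s. f (min s t)) - (b - t) * f t"
proof -
  have "continuous_on {a..b} (\<lambda>s. f (min s t))"
    by (rule continuous_on_compose2[OF assms(1)]) (use assms(2) in \<open>auto intro!: continuous_intros\<close>)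
  then have "integral {a..t} (\<lambda>s. f (min s t)) + integral {t..b} (\<lambda>s. f (min s t))
      = integral {a..b} (\<lambda>s. f (min s t))"
    using assms(2) by (intro Henstock_Kurzweil_Integration.integral_combine integrable_continuous_interval) auto
  moreover have "integral {a..t} (\<lambda>s. f (min s t)) = integral {a..t} f"
    by (rule integral_cong) auto
  moreover have "integral {t..b} (\<lambda>s. f (min s t)) = integral {t..b} (\<lambda>s. f t)"
    by (rule integral_cong) auto
  ultimately show ?thesis using assms(2) by simp
qed

text \<open>Writing the variable upper limit as \<open>min s t\<close> turns the integral into one over a fixed
  interval, to which continuity under the integral sign applies.\<close>
lemma continuous_on_integral_upto_param:
  fixes f :: "real \<Rightarrow> real \<Rightarrow> real"
  assumes f: "continuous_on ({a..b} \<times> S) (\<lambda>(s,y). f s y)"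
  shows "continuous_on ({a..b} \<times> S) (\<lambda>(t,y). integral {a..t} (\<lambda>s. f s y))"
proof -
  have min_param: "continuous_on (({a..b} \<times> S) \<times> cbox a b) (\<lambda>(ty, s). f (min s (fst ty)) (snd ty))"
  proof -
    let ?g = "\<lambda>(ty::real\<times>real, s::real). (min s (fst ty), snd ty)"
    have g: "continuous_on (({a..b} \<times> S) \<times> cbox a b) ?g"
      by (auto intro!: continuous_intros simp: case_prod_unfold)
    have "?g ` (({a..b} \<times> S) \<times> cbox a b) \<subseteq> {a..b} \<times> S"
      by auto
    from continuous_on_compose[OF g continuous_on_subset[OF f this]]
    show ?thesis by (simp add: o_def case_prod_unfold)
  qed
  have cont: "continuous_on ({a..b} \<times> S)
      (\<lambda>ty. integral (cbox a b) (\<lambda>s. f (min s (fst ty)) (snd ty)) - (b - fst ty) * f (fst ty) (snd ty))"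
  proof (intro continuous_on_diff)
    show "continuous_on ({a..b} \<times> S) (\<lambda>ty. (b - fst ty) * f (fst ty) (snd ty))"
      using f by (auto intro!: continuous_intros simp: case_prod_unfold)
  qed (rule integral_continuous_on_param[OF min_param])
  have eq: "integral {a..t} (\<lambda>s. f s y)
      = integral (cbox a b) (\<lambda>s. f (min s t) y) - (b - t) * f t y" if "(t,y) \<in> {a..b} \<times> S" for t y
    using that integral_upto_eq_integral_min[OF continuous_on_curry_snd[OF f], of y t] by simp
  show ?thesis
    by (rule continuous_on_eq[OF cont]) (auto simp: eq)
qed

lemma integral_has_real_derivative_interior:
  assumes "continuous_on {a..b} f" "t \<in> {a<..<b}"
  shows "((\<lambda>t. integral {a..t} f) has_real_derivative f t) (at t)"
proof -
  have "at t within {a..b} = at t"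
    using assms(2) by (intro at_within_open_subset[of t "{a<..<b}"]) auto
  with integral_has_real_derivative[OF assms(1), of t] assms(2) show ?thesis
    by simp
qed

lemma two_mult_diff_le_sum_squares:
  fixes a b c :: real
  shows "2 * a * (b - c) \<le> a\<^sup>2 + 2 * b\<^sup>2 + 2 * c\<^sup>2"
proof -
  have "a\<^sup>2 + 2 * b\<^sup>2 + 2 * c\<^sup>2 - 2 * a * (b - c) = (a - (b - c))\<^sup>2 + (b + c)\<^sup>2"
    by algebra
  moreover have "0 \<le> (a - (b - c))\<^sup>2 + (b + c)\<^sup>2" by simp
  ultimately show ?thesis by linarith
qed

lemma gronwall_affine:
  fixes Q Q' :: "real \<Rightarrow> real"
  assumes cont: "continuous_on {a..b} Q"
    and deriv: "\<And>s. s \<in> {a<..<b} \<Longrightarrow> (Q has_real_derivative Q' s) (at s)"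
    and growth: "\<And>s. s \<in> {a<..<b} \<Longrightarrow> Q' s \<le> Q s + K"
    and t: "t \<in> {a..b}"
  shows "Q t + K \<le> exp (t - a) * (Q a + K)"
proof -
  define R where "R s = exp (a - s) * (Q s + K)" for s
  have "R t \<le> R a"
  proof (rule DERIV_nonpos_imp_decreasing_open[of a t R])
    fix s assume s: "a < s" "s < t"
    then have s': "s \<in> {a<..<b}" using t by auto
    have "((\<lambda>s. exp (a - s)) has_real_derivative exp (a - s) * (0 - 1)) (at s)"
      by (intro DERIV_fun_exp DERIV_diff DERIV_const DERIV_ident)
    from DERIV_mult[OF this DERIV_add[OF deriv[OF s'] DERIV_const]]
    have "(R has_real_derivative exp (a - s) * (Q' s - (Q s + K))) (at s)"
      unfolding R_def by (simp add: algebra_simps)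
    moreover have "exp (a - s) * (Q' s - (Q s + K)) \<le> 0"
      using growth[OF s'] by (simp add: mult_nonneg_nonpos)
    ultimately show "\<exists>y. (R has_real_derivative y) (at s) \<and> y \<le> 0" by blast
  next
    show "continuous_on {a..t} R"
      unfolding R_def using t by (intro continuous_intros continuous_on_subset[OF cont]) auto
  qed (use t in auto)
  then have "exp (t - a) * (exp (a - t) * (Q t + K)) \<le> exp (t - a) * (Q a + K)"
    by (simp add: R_def)
  then show ?thesis by (simp add: mult.assoc[symmetric] exp_add[symmetric])
qed

locale neumann_wave_strip =
  fixes L T :: real
    and phi :: "real \<Rightarrow> real"
    and u ut ux utt uxx :: "real \<Rightarrow> real \<Rightarrow> real"
  assumes L_pos: "0 < L"
    and T_pos: "0 < T"
    and cont_u: "continuous_on ({0..T} \<times> {0..L}) (\<lambda>(t,x). u t x)"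
    and cont_ut: "continuous_on ({0..T} \<times> {0..L}) (\<lambda>(t,x). ut t x)"
    and cont_ux: "continuous_on ({0..T} \<times> {0..L}) (\<lambda>(t,x). ux t x)"
    and cont_utt: "continuous_on ({0<..<T} \<times> {0<..<L}) (\<lambda>(t,x). utt t x)"
    and cont_phi: "continuous_on UNIV phi"
    and u_t: "\<And>t x. t \<in> {0<..<T} \<Longrightarrow> x \<in> {0..L} \<Longrightarrow>
                ((\<lambda>s. u s x) has_real_derivative ut t x) (at t)"
    and u_x: "\<And>t x. t \<in> {0..T} \<Longrightarrow> x \<in> {0<..<L} \<Longrightarrow>
                ((\<lambda>y. u t y) has_real_derivative ux t x) (at x)"
    and ut_t: "\<And>t x. t \<in> {0<..<T} \<Longrightarrow> x \<in> {0<..<L} \<Longrightarrow>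
                ((\<lambda>s. ut s x) has_real_derivative utt t x) (at t)"
    and ux_x: "\<And>t x. t \<in> {0<..<T} \<Longrightarrow> x \<in> {0<..<L} \<Longrightarrow>
                ((\<lambda>y. ux t y) has_real_derivative uxx t x) (at x)"
    and wave_eq: "\<And>t x. t \<in> {0<..<T} \<Longrightarrow> x \<in> {0<..<L} \<Longrightarrow> utt t x = uxx t x - phi (u t x)"
    and neumann: "\<And>t. t \<in> {0<..T} \<Longrightarrow> ux t 0 = 0 \<and> ux t L = 0"
begin

definition phi_int :: "real \<Rightarrow> real \<Rightarrow> real" where
  "phi_int t y = integral {0..t} (\<lambda>s. phi (u s y))"

definition ux_int :: "real \<Rightarrow> real \<Rightarrow> real" where
  "ux_int t y = integral {0..t} (\<lambda>s. ux s y)"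

text \<open>By the wave equation this is \<open>\<integral>\<^sub>0\<^sup>t uxx\<close>; it is expressed through \<open>ut\<close> because \<open>uxx\<close>
  is only available in the open strip.\<close>
definition uxx_int :: "real \<Rightarrow> real \<Rightarrow> real" where
  "uxx_int t y = ut t y - ut 0 y + phi_int t y"

definition aux_energy :: "real \<Rightarrow> real" where
  "aux_energy t = integral {0..L} (\<lambda>x. (u t x)\<^sup>2 + (ux_int t x)\<^sup>2)"

lemma continuous_on_phi_u: "continuous_on ({0..T} \<times> {0..L}) (\<lambda>(t,x). phi (u t x))"
proof -
  have "continuous_on ({0..T} \<times> {0..L}) (\<lambda>z. phi ((\<lambda>(t,x). u t x) z))"
    by (rule continuous_on_compose2[OF cont_phi cont_u]) simp
  then show ?thesis by (simp add: case_prod_unfold)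
qed

lemma continuous_on_phi_int: "continuous_on ({0..T} \<times> {0..L}) (\<lambda>(t,y). phi_int t y)"
  unfolding phi_int_def by (rule continuous_on_integral_upto_param[OF continuous_on_phi_u])

lemma continuous_on_ux_int: "continuous_on ({0..T} \<times> {0..L}) (\<lambda>(t,y). ux_int t y)"
  unfolding ux_int_def by (rule continuous_on_integral_upto_param[OF cont_ux])

lemma continuous_on_uxx_int: "continuous_on ({0..T} \<times> {0..L}) (\<lambda>(t,y). uxx_int t y)"
proof -
  have "continuous_on ({0..T} \<times> {0..L}) (\<lambda>z. (\<lambda>(t,x). ut t x) (0, snd z))"
    by (rule continuous_on_compose2[OF cont_ut]) (use T_pos in \<open>auto intro!: continuous_intros\<close>)
  then have "continuous_on ({0..T} \<times> {0..L})
      (\<lambda>z. (\<lambda>(t,y). ut t y) z - (\<lambda>z. (\<lambda>(t,x). ut t x) (0, snd z)) z + (\<lambda>(t,y). phi_int t y) z)"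
    by (intro continuous_on_add continuous_on_diff cont_ut continuous_on_phi_int)
  then show ?thesis
    by (rule continuous_on_eq) (auto simp: uxx_int_def)
qed

lemma phi_int_has_derivative:
  "t \<in> {0<..<T} \<Longrightarrow> y \<in> {0..L} \<Longrightarrow> ((\<lambda>t. phi_int t y) has_real_derivative phi (u t y)) (at t)"
  unfolding phi_int_def
  by (rule integral_has_real_derivative_interior[OF continuous_on_curry_snd[OF continuous_on_phi_u]])

lemma ux_int_has_derivative:
  "t \<in> {0<..<T} \<Longrightarrow> y \<in> {0..L} \<Longrightarrow> ((\<lambda>t. ux_int t y) has_real_derivative ux t y) (at t)"
  unfolding ux_int_def
  by (rule integral_has_real_derivative_interior[OF continuous_on_curry_snd[OF cont_ux]])

lemma integral_uxx_int_has_derivative: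
  assumes s: "s \<in> {0<..<T}" and ab: "0 < a" "a \<le> b" "b < L"
  shows "((\<lambda>t. integral {a..b} (uxx_int t)) has_real_derivative ux s b - ux s a) (at s)"
proof -
  let ?U = "{0<..<T}"
  have "((\<lambda>t. integral (cbox a b) (uxx_int t)) has_field_derivative
      integral (cbox a b) (\<lambda>y. utt s y + phi (u s y))) (at s within ?U)"
  proof (rule leibniz_rule_field_derivative[where fx="\<lambda>t y. utt t y + phi (u t y)"])
    fix t y assume t: "t \<in> ?U" and y: "y \<in> cbox a b"
    then have "((\<lambda>t. ut t y - ut 0 y + phi_int t y) has_real_derivative utt t y - 0 + phi (u t y)) (at t)"
      using ab by (intro DERIV_add DERIV_diff DERIV_const ut_t phi_int_has_derivative) auto
    then show "((\<lambda>t. uxx_int t y) has_field_derivative utt t y + phi (u t y)) (at t within ?U)"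
      unfolding uxx_int_def by (simp add: has_field_derivative_at_within)
  next
    fix t assume "t \<in> ?U"
    then have "continuous_on {a..b} (uxx_int t)"
      by (intro continuous_on_subset[OF continuous_on_curry_fst[OF continuous_on_uxx_int]]) (use ab in auto)
    then show "uxx_int t integrable_on cbox a b" by (simp add: integrable_continuous_interval)
  next
    have "continuous_on (?U \<times> cbox a b) (\<lambda>z. (\<lambda>(t,y). utt t y) z + (\<lambda>(t,x). phi (u t x)) z)"
      using ab by (intro continuous_on_add continuous_on_subset[OF cont_utt]
          continuous_on_subset[OF continuous_on_phi_u]) auto
    then show "continuous_on (?U \<times> cbox a b) (\<lambda>(t, y). utt t y + phi (u t y))"
      by (rule continuous_on_eq) auto
  qed (use s in auto)
  moreover have "at s within ?U = at s" by (rule at_within_open) (use s in auto)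
  moreover have "integral {a..b} (\<lambda>y. utt s y + phi (u s y)) = integral {a..b} (uxx s)"
    by (rule integral_cong) (use wave_eq s ab in auto)
  moreover have "(uxx s has_integral ux s b - ux s a) {a..b}"
  proof (rule fundamental_theorem_of_calculus)
    fix y assume "y \<in> {a..b}"
    then have "((\<lambda>y. ux s y) has_real_derivative uxx s y) (at y)" using ux_x s ab by auto
    then show "(ux s has_vector_derivative uxx s y) (at y within {a..b})"
      by (simp add: has_real_derivative_iff_has_vector_derivative has_vector_derivative_at_within)
  qed fact
  ultimately show ?thesis by (simp add: integral_unique)
qed

lemma ux_int_increment:
  assumes t: "t \<in> {0..T}" and ab: "0 < a" "a \<le> b" "b < L"
  shows "ux_int t b - ux_int t a = integral {a..b} (uxx_int t)"
proof -
  define F where "F t = integral {a..b} (uxx_int t) - (ux_int t b - ux_int t a)" for t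
  have cont: "continuous_on {0..T} F"
  proof -
    have "continuous_on ({0..T} \<times> cbox a b) (\<lambda>(t,y). uxx_int t y)"
      using ab by (auto intro: continuous_on_subset[OF continuous_on_uxx_int])
    from integral_continuous_on_param[OF this] show ?thesis
      unfolding F_def using ab
      by (auto intro!: continuous_on_diff continuous_on_curry_snd[OF continuous_on_ux_int])
  qed
  have deriv: "(F has_real_derivative 0) (at s)" if "s \<in> {0<..<T}" for s
  proof -
    have "b \<in> {0..L}" "a \<in> {0..L}" using ab by auto
    from DERIV_diff[OF integral_uxx_int_has_derivative[OF that ab]
        DERIV_diff[OF ux_int_has_derivative[OF that this(1)] ux_int_has_derivative[OF that this(2)]]]
    show ?thesis unfolding F_def by simp
  qed
  have "F t = F 0"
  proof (cases "t = 0")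
    case False
    then show ?thesis
      using t by (intro DERIV_isconst_end[of 0 t F] deriv continuous_on_subset[OF cont]) auto
  qed simp
  moreover have "F 0 = 0" by (simp add: F_def uxx_int_def[abs_def] phi_int_def ux_int_def)
  ultimately show ?thesis by (simp add: F_def)
qed

lemma ux_int_has_derivative_x:
  assumes t: "t \<in> {0..T}" and x: "x \<in> {0<..<L}"
  shows "((\<lambda>y. ux_int t y) has_real_derivative uxx_int t x) (at x)"
proof -
  define a b where "a = x / 2" and "b = (x + L) / 2"
  have ab: "0 < a" "a < x" "x < b" "b < L" using x by (auto simp: a_def b_def)
  have "continuous_on {a..b} (uxx_int t)"
    using ab by (intro continuous_on_subset[OF continuous_on_curry_fst[OF continuous_on_uxx_int t]]) auto
  then have "((\<lambda>y. ux_int t a + integral {a..y} (uxx_int t)) has_real_derivative uxx_int t x) (at x)"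
    using ab DERIV_add[OF DERIV_const integral_has_real_derivative_interior] by fastforce
  then show ?thesis
  proof (rule has_field_derivative_transform_within_open[of _ _ _ "{a<..<b}"])
    fix y assume "y \<in> {a<..<b}"
    then show "ux_int t a + integral {a..y} (uxx_int t) = ux_int t y"
      using ux_int_increment[OF t, of a y] ab by auto
  qed (use ab in auto)
qed

lemma ux_int_boundary:
  assumes "t \<in> {0..T}" "y = 0 \<or> y = L"
  shows "ux_int t y = 0"
proof -
  have "integral {0..t} (\<lambda>s. ux s y) = integral {0..t} (\<lambda>s. 0)"
    by (rule integral_spike[of "{0}"]) (use neumann assms in auto)
  then show ?thesis by (simp add: ux_int_def)
qed

lemma integral_uxx_int_u:
  assumes t: "t \<in> {0..T}"
  shows "((\<lambda>x. uxx_int t x * u t x + ux_int t x * ux t x) has_integral 0) {0..L}"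
proof -
  have "((\<lambda>x. uxx_int t x * u t x + ux_int t x * ux t x) has_integral
      ux_int t L * u t L - ux_int t 0 * u t 0) {0..L}"
  proof (rule fundamental_theorem_of_calculus_interior)
    show "continuous_on {0..L} (\<lambda>x. ux_int t x * u t x)"
      by (intro continuous_on_mult continuous_on_curry_fst[OF continuous_on_ux_int t]
          continuous_on_curry_fst[OF cont_u t])
    fix x assume x: "x \<in> {0<..<L}"
    from DERIV_mult[OF ux_int_has_derivative_x[OF t x] u_x[OF t x]]
    show "((\<lambda>x. ux_int t x * u t x) has_vector_derivative uxx_int t x * u t x + ux_int t x * ux t x) (at x)"
      by (simp add: has_real_derivative_iff_has_vector_derivative mult.commute)
  qed (use L_pos in simp)
  then show ?thesis using ux_int_boundary[OF t] by simp
qed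

lemma continuous_on_aux_energy: "continuous_on {0..T} aux_energy"
proof -
  have "continuous_on ({0..T} \<times> {0..L})
      (\<lambda>z. ((\<lambda>(t,x). u t x) z)\<^sup>2 + ((\<lambda>(t,x). ux_int t x) z)\<^sup>2)"
    by (intro continuous_intros cont_u continuous_on_ux_int)
  then have "continuous_on ({0..T} \<times> {0..L}) (\<lambda>(t,x). (u t x)\<^sup>2 + (ux_int t x)\<^sup>2)"
    by (rule continuous_on_eq) auto
  then have "continuous_on ({0..T} \<times> cbox 0 L) (\<lambda>(t,x). (u t x)\<^sup>2 + (ux_int t x)\<^sup>2)"
    by simp
  from integral_continuous_on_param[OF this] show ?thesis
    by (simp add: aux_energy_def)
qed

lemma aux_energy_has_derivative:
  assumes s: "s \<in> {0<..<T}"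
  shows "(aux_energy has_real_derivative
      integral {0..L} (\<lambda>x. 2 * u s x * ut s x + 2 * ux_int s x * ux s x)) (at s)"
proof -
  let ?U = "{0<..<T}"
  have "((\<lambda>t. integral (cbox 0 L) (\<lambda>x. (u t x)\<^sup>2 + (ux_int t x)\<^sup>2)) has_field_derivative
      integral (cbox 0 L) (\<lambda>x. 2 * u s x * ut s x + 2 * ux_int s x * ux s x)) (at s within ?U)"
  proof (rule leibniz_rule_field_derivative[where fx="\<lambda>t x. 2 * u t x * ut t x + 2 * ux_int t x * ux t x"])
    fix t y assume t: "t \<in> ?U" and y: "y \<in> cbox 0 L"
    then have "((\<lambda>t. (u t y)\<^sup>2 + (ux_int t y)\<^sup>2) has_real_derivative
        2 * u t y * ut t y + 2 * ux_int t y * ux t y) (at t)"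
      by (auto intro!: derivative_eq_intros u_t ux_int_has_derivative)
    then show "((\<lambda>t. (u t y)\<^sup>2 + (ux_int t y)\<^sup>2) has_field_derivative
        2 * u t y * ut t y + 2 * ux_int t y * ux t y) (at t within ?U)"
      by (rule has_field_derivative_at_within)
  next
    fix t assume "t \<in> ?U"
    then have "continuous_on {0..L} (\<lambda>y. (u t y)\<^sup>2 + (ux_int t y)\<^sup>2)"
      by (intro continuous_intros continuous_on_curry_fst[OF cont_u]
          continuous_on_curry_fst[OF continuous_on_ux_int]) auto
    then show "(\<lambda>y. (u t y)\<^sup>2 + (ux_int t y)\<^sup>2) integrable_on cbox 0 L"
      by (simp add: integrable_continuous_interval)
  next
    have "?U \<times> cbox 0 L \<subseteq> {0..T} \<times> {0..L}" by auto
    note sub = continuous_on_subset[OF _ this]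
    have "continuous_on (?U \<times> cbox 0 L) (\<lambda>z. 2 * (\<lambda>(t,x). u t x) z * (\<lambda>(t,x). ut t x) z
        + 2 * (\<lambda>(t,x). ux_int t x) z * (\<lambda>(t,x). ux t x) z)"
      by (intro continuous_intros sub[OF cont_u] sub[OF cont_ut] sub[OF continuous_on_ux_int] sub[OF cont_ux])
    then show "continuous_on (?U \<times> cbox 0 L) (\<lambda>(t, x). 2 * u t x * ut t x + 2 * ux_int t x * ux t x)"
      by (rule continuous_on_eq) auto
  qed (use s in auto)
  moreover have "at s within ?U = at s" by (rule at_within_open) (use s in auto)
  ultimately show ?thesis by (simp add: aux_energy_def[abs_def])
qed

lemma aux_energy_derivative_eq:
  assumes s: "s \<in> {0..T}"
  shows "integral {0..L} (\<lambda>x. 2 * u s x * ut s x + 2 * ux_int s x * ux s x)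
       = integral {0..L} (\<lambda>x. 2 * u s x * (ut 0 x - phi_int s x))"
proof -
  have "continuous_on {0..L} (\<lambda>x. 2 * u s x * (ut 0 x - phi_int s x))"
    using s T_pos by (intro continuous_intros continuous_on_curry_fst[OF cont_u]
        continuous_on_curry_fst[OF cont_ut] continuous_on_curry_fst[OF continuous_on_phi_int]) auto
  then have "((\<lambda>x. 2 * (uxx_int s x * u s x + ux_int s x * ux s x) + 2 * u s x * (ut 0 x - phi_int s x))
      has_integral 2 * 0 + integral {0..L} (\<lambda>x. 2 * u s x * (ut 0 x - phi_int s x))) {0..L}"
    by (intro has_integral_add has_integral_mult_right integral_uxx_int_u[OF s]
        integrable_integral integrable_continuous_interval)
  then have "((\<lambda>x. 2 * u s x * ut s x + 2 * ux_int s x * ux s x)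
      has_integral integral {0..L} (\<lambda>x. 2 * u s x * (ut 0 x - phi_int s x))) {0..L}"
    by (simp add: uxx_int_def algebra_simps)
  then show ?thesis by (rule integral_unique)
qed

lemma phi_int_bound:
  assumes bound: "\<And>y. \<bar>phi y\<bar> \<le> C" and t: "t \<in> {0..T}" and y: "y \<in> {0..L}"
  shows "\<bar>phi_int t y\<bar> \<le> C * T"
proof -
  have "norm (integral {0..t} (\<lambda>s. phi (u s y))) \<le> C * (t - 0)"
    using t bound
    by (intro integral_bound continuous_on_subset[OF continuous_on_curry_snd[OF continuous_on_phi_u y]]) auto
  then have "\<bar>phi_int t y\<bar> \<le> C * (t - 0)"
    by (simp add: phi_int_def)
  also have "\<dots> \<le> C * T"
    using t bound[of 0] by (intro mult_left_mono) auto
  finally show ?thesis .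
qed

lemma aux_energy_derivative_le:
  assumes bound: "\<And>y. \<bar>phi y\<bar> \<le> C" and s: "s \<in> {0..T}"
  shows "integral {0..L} (\<lambda>x. 2 * u s x * ut s x + 2 * ux_int s x * ux s x)
       \<le> aux_energy s + (2 * integral {0..L} (\<lambda>x. (ut 0 x)\<^sup>2) + 2 * C\<^sup>2 * T\<^sup>2 * L)"
proof -
  have cont: "continuous_on {0..L} (u s)" "continuous_on {0..L} (ut 0)"
    "continuous_on {0..L} (ux_int s)" "continuous_on {0..L} (phi_int s)"
    using s T_pos by (auto intro!: continuous_on_curry_fst[OF cont_u] continuous_on_curry_fst[OF cont_ut]
        continuous_on_curry_fst[OF continuous_on_ux_int] continuous_on_curry_fst[OF continuous_on_phi_int])
  have "integral {0..L} (\<lambda>x. 2 * u s x * (ut 0 x - phi_int s x))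
      \<le> integral {0..L} (\<lambda>x. ((u s x)\<^sup>2 + (ux_int s x)\<^sup>2) + (2 * (ut 0 x)\<^sup>2 + 2 * (C * T)\<^sup>2))"
  proof (rule integral_le)
    fix x assume x: "x \<in> {0..L}"
    have "(phi_int s x)\<^sup>2 \<le> (C * T)\<^sup>2"
      using phi_int_bound[OF bound s x] by (metis abs_ge_zero power2_abs power_mono)
    then show "2 * u s x * (ut 0 x - phi_int s x)
        \<le> ((u s x)\<^sup>2 + (ux_int s x)\<^sup>2) + (2 * (ut 0 x)\<^sup>2 + 2 * (C * T)\<^sup>2)"
      using two_mult_diff_le_sum_squares[of "u s x" "ut 0 x" "phi_int s x"] zero_le_power2[of "ux_int s x"]
      by linarith
  qed (use cont in \<open>auto intro!: integrable_continuous_interval continuous_intros\<close>)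
  also have "\<dots> = aux_energy s + integral {0..L} (\<lambda>x. 2 * (ut 0 x)\<^sup>2 + 2 * (C * T)\<^sup>2)"
    unfolding aux_energy_def using cont
    by (intro integral_add integrable_continuous_interval continuous_intros)
  also have "integral {0..L} (\<lambda>x. 2 * (ut 0 x)\<^sup>2 + 2 * (C * T)\<^sup>2)
      = 2 * integral {0..L} (\<lambda>x. (ut 0 x)\<^sup>2) + 2 * C\<^sup>2 * T\<^sup>2 * L"
  proof -
    have "(\<lambda>x. (ut 0 x)\<^sup>2) integrable_on {0..L}"
      using cont by (intro integrable_continuous_interval continuous_intros)
    then have "integral {0..L} (\<lambda>x. 2 * (ut 0 x)\<^sup>2 + 2 * (C * T)\<^sup>2)
        = integral {0..L} (\<lambda>x. 2 * (ut 0 x)\<^sup>2) + integral {0..L} (\<lambda>x. 2 * (C * T)\<^sup>2)"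
      by (intro integral_add integrable_on_mult_right) auto
    then show ?thesis
      using L_pos by (simp add: power_mult_distrib)
  qed
  finally show ?thesis using aux_energy_derivative_eq[OF s] by simp
qed

theorem integral_square_bound:
  assumes bound: "\<And>y. \<bar>phi y\<bar> \<le> C" and t: "t \<in> {0..T}"
  shows "integral {0..L} (\<lambda>x. (u t x)\<^sup>2)
       \<le> exp T * (integral {0..L} (\<lambda>x. (u 0 x)\<^sup>2) + 2 * integral {0..L} (\<lambda>x. (ut 0 x)\<^sup>2) + 2 * C\<^sup>2 * T\<^sup>2 * L)"
proof -
  define K where "K = 2 * integral {0..L} (\<lambda>x. (ut 0 x)\<^sup>2) + 2 * C\<^sup>2 * T\<^sup>2 * L"
  have cont: "continuous_on {0..L} (u t)" "continuous_on {0..L} (ut 0)" "continuous_on {0..L} (ux_int t)"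
    using t T_pos by (auto intro!: continuous_on_curry_fst[OF cont_u] continuous_on_curry_fst[OF cont_ut]
        continuous_on_curry_fst[OF continuous_on_ux_int])
  have "aux_energy t + K \<le> exp (t - 0) * (aux_energy 0 + K)"
    using t unfolding K_def
    by (intro gronwall_affine[OF continuous_on_aux_energy aux_energy_has_derivative]
        aux_energy_derivative_le[OF bound]) auto
  moreover have "aux_energy 0 = integral {0..L} (\<lambda>x. (u 0 x)\<^sup>2)"
    by (simp add: aux_energy_def ux_int_def)
  moreover have "integral {0..L} (\<lambda>x. (u t x)\<^sup>2) \<le> aux_energy t"
    unfolding aux_energy_def using cont
    by (intro integral_le) (auto intro!: integrable_continuous_interval continuous_intros)
  moreover have "0 \<le> integral {0..L} (\<lambda>x. (u 0 x)\<^sup>2)" "0 \<le> integral {0..L} (\<lambda>x. (ut 0 x)\<^sup>2)"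
    using cont T_pos
    by (auto intro!: integral_nonneg integrable_continuous_interval continuous_intros
        continuous_on_curry_fst[OF cont_u])
  then have "0 \<le> K"
    unfolding K_def using L_pos by simp
  ultimately have "integral {0..L} (\<lambda>x. (u t x)\<^sup>2) \<le> exp t * (integral {0..L} (\<lambda>x. (u 0 x)\<^sup>2) + K)"
    by simp
  also have "\<dots> \<le> exp T * (integral {0..L} (\<lambda>x. (u 0 x)\<^sup>2) + K)"
    using \<open>0 \<le> K\<close> \<open>0 \<le> integral {0..L} (\<lambda>x. (u 0 x)\<^sup>2)\<close> t by (intro mult_right_mono) auto
  finally show ?thesis
    unfolding K_def by (simp add: add.assoc)
qed

end

lemma classical_solution_neumann_wave_strip:
  assumes sol: "classical_solution L F v0 v1 u" and L: "0 < L" and T: "0 < T"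
    and cont_F': "continuous_on UNIV (deriv F)"
  obtains ut ux utt uxx where "neumann_wave_strip L T (deriv F) u ut ux utt uxx"
    and "\<And>x. x \<in> {0..L} \<Longrightarrow> u 0 x = v0 x \<and> ut 0 x = v1 x"
proof -
  obtain ut ux utt uxx utx uxt :: "real \<Rightarrow> real \<Rightarrow> real" where
    cont: "continuous_on ({0..} \<times> {0..L}) (\<lambda>(t,x). u t x)"
      "continuous_on ({0..} \<times> {0..L}) (\<lambda>(t,x). ut t x)"
      "continuous_on ({0..} \<times> {0..L}) (\<lambda>(t,x). ux t x)"
      "continuous_on ({0<..} \<times> {0<..<L}) (\<lambda>(t,x). utt t x)" and
    d1: "\<forall>t\<ge>0. \<forall>x\<in>{0..L}.
       ((\<lambda>s. u s x) has_real_derivative ut t x) (at t within {0..}) \<and>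
       ((\<lambda>y. u t y) has_real_derivative ux t x) (at x within {0..L})" and
    d2: "\<forall>t>0. \<forall>x\<in>{0<..<L}.
       ((\<lambda>s. ut s x) has_real_derivative utt t x) (at t) \<and>
       ((\<lambda>y. ux t y) has_real_derivative uxx t x) (at x) \<and>
       ((\<lambda>s. ux s x) has_real_derivative utx t x) (at t) \<and>
       ((\<lambda>y. ut t y) has_real_derivative uxt t x) (at x)" and
    eq: "\<forall>t>0. \<forall>x\<in>{0<..<L}. utt t x = uxx t x - deriv F (u t x)" and
    bc: "\<forall>t>0. ux t 0 = 0 \<and> ux t L = 0" and
    ic: "\<forall>x\<in>{0..L}. u 0 x = v0 x \<and> ut 0 x = v1 x"
    using sol unfolding classical_solution_def by blast
  have "neumann_wave_strip L T (deriv F) u ut ux utt uxx"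
  proof
    show "continuous_on ({0..T} \<times> {0..L}) (\<lambda>(t,x). u t x)"
      "continuous_on ({0..T} \<times> {0..L}) (\<lambda>(t,x). ut t x)"
      "continuous_on ({0..T} \<times> {0..L}) (\<lambda>(t,x). ux t x)"
      by (rule continuous_on_subset[OF cont(1)] continuous_on_subset[OF cont(2)]
          continuous_on_subset[OF cont(3)]; auto)+
    show "continuous_on ({0<..<T} \<times> {0<..<L}) (\<lambda>(t,x). utt t x)"
      by (rule continuous_on_subset[OF cont(4)]) auto
  next
    fix t x assume t: "t \<in> {0<..<T}" and "x \<in> {0..L}"
    with d1 have "((\<lambda>s. u s x) has_real_derivative ut t x) (at t within {0..})" by auto
    moreover have "at t within {0..} = at t"
      using t by (intro at_within_open_subset[of t "{0<..}"]) auto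
    ultimately show "((\<lambda>s. u s x) has_real_derivative ut t x) (at t)" by simp
  next
    fix t x assume "t \<in> {0..T}" and x: "x \<in> {0<..<L}"
    with d1 have "((\<lambda>y. u t y) has_real_derivative ux t x) (at x within {0..L})" by auto
    moreover have "at x within {0..L} = at x"
      using x by (intro at_within_open_subset[of x "{0<..<L}"]) auto
    ultimately show "((\<lambda>y. u t y) has_real_derivative ux t x) (at x)" by simp
  next
    fix t x assume "t \<in> {0<..<T}" "x \<in> {0<..<L}"
    then show "((\<lambda>s. ut s x) has_real_derivative utt t x) (at t)"
      "((\<lambda>y. ux t y) has_real_derivative uxx t x) (at x)"
      "utt t x = uxx t x - deriv F (u t x)"
      using d2 eq by auto
  next
    fix t assume "t \<in> {0<..T}"
    then show "ux t 0 = 0 \<and> ux t L = 0" using bc by auto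
  qed (fact L T cont_F')+
  with ic show ?thesis using that by blast
qed

lemma continuous_on_deriv_if_smooth_fun: "smooth_fun f \<Longrightarrow> continuous_on UNIV (deriv f)"
proof (intro continuous_at_imp_continuous_on ballI)
  fix x
  assume "smooth_fun f"
  then have "((deriv ^^ 1) f) differentiable (at x)"
    unfolding smooth_fun_def by blast
  then show "isCont (deriv f) x"
    by (simp add: differentiable_imp_continuous_within)
qed

lemma L2norm_le_H1norm: "L2norm L f \<le> H1norm L f"
  unfolding H1norm_def by (rule real_le_rsqrt) simp

lemma integral_square_le_if_L2norm_le: "L2norm L f \<le> C \<Longrightarrow> integral {0..L} (\<lambda>x. (f x)\<^sup>2) \<le> C\<^sup>2"
  unfolding L2norm_def by (rule sqrt_le_D)

theorem lemma3p4:
  fixes L C :: real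
    and \<Phi> :: "real \<Rightarrow> real"
    and u0 u1 :: "real \<Rightarrow> real"
    and u0n u1n :: "nat \<Rightarrow> real \<Rightarrow> real"
    and \<Phi>n :: "nat \<Rightarrow> real \<Rightarrow> real"
    and u :: "nat \<Rightarrow> real \<Rightarrow> real \<Rightarrow> real"
  assumes L_pos: "L > 0"
    and Phi_cont: "continuous_on UNIV \<Phi>"
    and Phi_diff: "\<forall>x. x \<notin> {-1, 1} \<longrightarrow> \<Phi> differentiable (at x)"
    and Phi_C1: "continuous_on (UNIV - {-1, 1}) (deriv \<Phi>)"
    and Phi_const_left: "\<forall>x. x \<le> -1 \<longrightarrow> \<Phi> x = \<Phi> (-1)"
    and Phi_const_right: "\<forall>x. x \<ge> 1 \<longrightarrow> \<Phi> x = \<Phi> 1"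
    and Phi_convex: "convex_on {-1..1} \<Phi>"
    and Phi_decr: "\<forall>x y. -1 \<le> x \<longrightarrow> x \<le> y \<longrightarrow> y \<le> 0 \<longrightarrow> \<Phi> y \<le> \<Phi> x"
    and Phi_incr: "\<forall>x y. 0 \<le> x \<longrightarrow> x \<le> y \<longrightarrow> y \<le> 1 \<longrightarrow> \<Phi> x \<le> \<Phi> y"
    and u0_H1: "H1 L u0"
    and u1_L2: "L2 L u1"
    and u0n_smooth: "\<forall>n. smooth_on_interval 0 L (u0n n)"
    and u1n_smooth: "\<forall>n. smooth_on_interval 0 L (u1n n)"
    and Phin_smooth: "\<forall>n. smooth_fun (\<Phi>n n)"
    and u0n_conv: "(\<lambda>n. H1norm L (\<lambda>x. u0n n x - u0 x)) \<longlonglongrightarrow> 0"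
    and u1n_conv: "(\<lambda>n. L2norm L (\<lambda>x. u1n n x - u1 x)) \<longlonglongrightarrow> 0"
    and Phin_unif: "uniform_limit UNIV \<Phi>n \<Phi> sequentially"
    and Phin'_pointwise: "\<forall>x. x \<notin> {-1, 1} \<longrightarrow> (\<lambda>n. deriv (\<Phi>n n) x) \<longlonglongrightarrow> deriv \<Phi> x"
    and Phin'_unif: "\<forall>\<epsilon>>0. uniform_limit (UNIV - ({-1-\<epsilon><..<-1+\<epsilon>} \<union> {1-\<epsilon><..<1+\<epsilon>}))
                              (\<lambda>n. deriv (\<Phi>n n)) (deriv \<Phi>) sequentially"
    and Phin'_zero: "\<forall>\<epsilon>>0. \<forall>n x. \<bar>x\<bar> \<ge> 1 + \<epsilon> \<longrightarrow> deriv (\<Phi>n n) x = 0"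
    and C_pos: "C > 0"
    and u0n_bound: "\<forall>n. H1norm L (u0n n) \<le> C"
    and u1n_bound: "\<forall>n. L2norm L (u1n n) \<le> C"
    and Phin_bound: "\<forall>n x. 0 \<le> \<Phi>n n x \<and> \<Phi>n n x \<le> C"
    and Phin'_bound: "\<forall>n x. \<bar>deriv (\<Phi>n n) x\<bar> \<le> C"
    and u0n_neumann: "\<forall>n. (u0n n has_real_derivative 0) (at 0 within {0..L}) \<and>
                          (u0n n has_real_derivative 0) (at L within {0..L})"
    and u1n_bc: "\<forall>n. u1n n 0 = 0 \<and> u1n n L = 0"
    and u_sol: "\<forall>n. classical_solution L (\<Phi>n n) (u0n n) (u1n n) (u n)"
  shows "\<forall>T>0. \<exists>M. \<forall>n. \<forall>t\<in>{0..T}. L2norm L (u n t) \<le> M"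
proof (intro allI impI)
  fix T :: real
  assume T: "T > 0"
  define M where "M = sqrt (exp T * (C\<^sup>2 + 2 * C\<^sup>2 + 2 * C\<^sup>2 * T\<^sup>2 * L))"
  have "L2norm L (u n t) \<le> M" if t: "t \<in> {0..T}" for n t
  proof -
    obtain ut ux utt uxx where strip: "neumann_wave_strip L T (deriv (\<Phi>n n)) (u n) ut ux utt uxx"
      and init: "\<And>x. x \<in> {0..L} \<Longrightarrow> u n 0 x = u0n n x \<and> ut 0 x = u1n n x"
      using classical_solution_neumann_wave_strip[OF u_sol[rule_format, of n] L_pos T
          continuous_on_deriv_if_smooth_fun[OF Phin_smooth[rule_format, of n]]] by blast
    have "integral {0..L} (\<lambda>x. (u n t x)\<^sup>2) \<le> exp T * (integral {0..L} (\<lambda>x. (u n 0 x)\<^sup>2)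
        + 2 * integral {0..L} (\<lambda>x. (ut 0 x)\<^sup>2) + 2 * C\<^sup>2 * T\<^sup>2 * L)"
      using neumann_wave_strip.integral_square_bound[OF strip] Phin'_bound t by blast
    also have "\<dots> = exp T * (integral {0..L} (\<lambda>x. (u0n n x)\<^sup>2)
        + 2 * integral {0..L} (\<lambda>x. (u1n n x)\<^sup>2) + 2 * C\<^sup>2 * T\<^sup>2 * L)"
    proof -
      have "integral {0..L} (\<lambda>x. (u n 0 x)\<^sup>2) = integral {0..L} (\<lambda>x. (u0n n x)\<^sup>2)"
        "integral {0..L} (\<lambda>x. (ut 0 x)\<^sup>2) = integral {0..L} (\<lambda>x. (u1n n x)\<^sup>2)"
        using init by (auto intro: integral_cong)
      then show ?thesis by simp
    qed
    also have "\<dots> \<le> exp T * (C\<^sup>2 + 2 * C\<^sup>2 + 2 * C\<^sup>2 * T\<^sup>2 * L)"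
      using integral_square_le_if_L2norm_le[OF order_trans[OF L2norm_le_H1norm u0n_bound[rule_format, of n]]]
        integral_square_le_if_L2norm_le[OF u1n_bound[rule_format, of n]]
      by (intro mult_left_mono) auto
    finally show ?thesis
      unfolding L2norm_def M_def by (rule real_sqrt_le_mono)
  qed
  then show "\<exists>M. \<forall>n. \<forall>t\<in>{0..T}. L2norm L (u n t) \<le> M" by blast
qed

end
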